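(* There is $R_0$ such that the following holds for $R\ge R_0$ with $R^2\in\mathbb{Z}$. Let $\mathcal{E}=\mathbb{Z}^3\cap\{x:|x|=R\}$ and let $\mathcal{G}$ be the graph on the vertex set $\mathcal{E}$ in which $m,n\in\mathcal{E}$ are joined when $|m-n|<R^{1/5}$. Then each connected component of $\mathcal{G}$ is contained in an affine plane of $\mathbb{R}^3$. *)

theory Defs
  imports "HOL-Analysis.Analysis"
begin

definition sphere_lattice :: "real \<Rightarrow> (real^3) set" where
  "sphere_lattice R = {x. (\<forall>i. x $ i \<in> \<int>) \<and> norm x = R}"

definition close_graph :: "real \<Rightarrow> real^3 \<Rightarrow> real^3 \<Rightarrow> bool" where
  "close_graph R m n \<longleftrightarrow> m \<in> sphere_lattice R \<and> n \<in> sphere_lattice R \<and> m \<noteq> n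
     \<and> norm (m - n) < R powr (1/5)"

definition component :: "real \<Rightarrow> real^3 \<Rightarrow> (real^3) set" where
  "component R m = {n. (close_graph R)\<^sup>*\<^sup>* m n}"

end

theory Submission
  imports Defs
begin

text \<open>
  If \<open>p\<^sub>0, \<dots>, p\<^sub>3\<close> are lattice points on the sphere \<open>|x| = R\<close> within distance \<open>r\<close> of \<open>p\<^sub>0\<close>,
  the triple product \<open>T\<close> of the chords \<open>p\<^sub>i - p\<^sub>0\<close> is an integer. Expanding \<open>T p\<^sub>0\<close> in the
  basis dual to the chords, the coefficients are \<open>p\<^sub>0 \<bullet> (p\<^sub>i - p\<^sub>0) = -|p\<^sub>i - p\<^sub>0|\<^sup>2/2\<close>, so
  \<open>|T| R \<le> 3r\<^sup>4/2\<close>. For \<open>r = 4R\<^bsup>1/5\<^esup>\<close> and large \<open>R\<close> this forces \<open>T = 0\<close>: nearby lattice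
  points on the sphere are coplanar. Since three distinct points of a sphere are never collinear,
  the plane spanned by two consecutive edges of a path also contains the next vertex, so the plane
  through the neighbourhood of one vertex propagates along its whole component.
\<close>

unbundle cross3_syntax

lemma inner_chord_eq:
  fixes p q :: "'a::real_inner"
  assumes "norm q = norm p"
  shows "p \<bullet> (q - p) = - (norm (q - p))\<^sup>2 / 2"
proof -
  have "(norm (q - p))\<^sup>2 = q \<bullet> q - 2 * (p \<bullet> q) + p \<bullet> p"
    by (simp add: power2_norm_eq_inner inner_diff_left inner_diff_right inner_commute[of q p])
  moreover have "q \<bullet> q = p \<bullet> p"
    using assms by (metis power2_norm_eq_inner)
  ultimately show ?thesis
    by (simp add: inner_diff_right)
qed

lemma norm_cross3_le: "norm (x \<times> y) \<le> norm x * norm y" for x y :: "real^3"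
proof -
  have "(norm (x \<times> y))\<^sup>2 \<le> (norm x * norm y)\<^sup>2"
    using norm_cross_dot[of x y] zero_le_power2[of "x \<bullet> y"] by linarith
  then show ?thesis
    by (rule power2_le_imp_le) simp
qed

lemma triple_product_cyclic: "u \<bullet> (v \<times> w) = w \<bullet> (u \<times> v)"
  by (simp add: cross3_simps)

lemma triple_product_smult_expansion:
  "(u \<bullet> (v \<times> w)) *\<^sub>R p = (p \<bullet> u) *\<^sub>R (v \<times> w) + (p \<bullet> v) *\<^sub>R (w \<times> u) + (p \<bullet> w) *\<^sub>R (u \<times> v)"
  by (simp add: cross3_simps forall_3)

lemma cross3_gram_expansion:
  "((u \<times> v) \<bullet> (u \<times> v)) *\<^sub>R w = ((w \<bullet> u) * (v \<bullet> v) - (w \<bullet> v) * (u \<bullet> v)) *\<^sub>R u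
     + ((w \<bullet> v) * (u \<bullet> u) - (w \<bullet> u) * (u \<bullet> v)) *\<^sub>R v + (w \<bullet> (u \<times> v)) *\<^sub>R (u \<times> v)"
  by (simp add: cross3_simps forall_3)

lemma triple_product_Ints:
  assumes "\<forall>i. u $ i \<in> \<int>" "\<forall>i. v $ i \<in> \<int>" "\<forall>i. w $ i \<in> \<int>"
  shows "u \<bullet> (v \<times> w) \<in> \<int>"
  using assms by (simp add: cross3_def inner_vec_def sum_3 vector_def)

lemma abs_triple_product_mult_norm_le:
  fixes p0 p1 p2 p3 :: "real^3"
  assumes "norm p1 = norm p0" "norm p2 = norm p0" "norm p3 = norm p0"
    and "norm (p1 - p0) \<le> r" "norm (p2 - p0) \<le> r" "norm (p3 - p0) \<le> r"
  shows "\<bar>(p1 - p0) \<bullet> ((p2 - p0) \<times> (p3 - p0))\<bar> * norm p0 \<le> 3 / 2 * r ^ 4"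
proof -
  define u v w where "u = p1 - p0" "v = p2 - p0" "w = p3 - p0"
  have r: "norm u \<le> r" "norm v \<le> r" "norm w \<le> r"
    using assms(4-6) by (simp_all add: u_v_w_def)
  have term_le: "\<bar>p0 \<bullet> a\<bar> * norm (b \<times> c) \<le> r ^ 4 / 2"
    if "norm a \<le> r" "norm b \<le> r" "norm c \<le> r" "\<bar>p0 \<bullet> a\<bar> = (norm a)\<^sup>2 / 2" for a b c
  proof -
    have "norm (b \<times> c) \<le> r * r"
      using norm_cross3_le[of b c] mult_mono[OF that(2,3)] that(2) by (smt (verit) norm_ge_zero)
    moreover have "(norm a)\<^sup>2 \<le> r\<^sup>2"
      using that(1) by (simp add: power_mono)
    ultimately have "\<bar>p0 \<bullet> a\<bar> * norm (b \<times> c) \<le> r\<^sup>2 / 2 * (r * r)"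
      using that(4) by (intro mult_mono) auto
    then show ?thesis
      by (simp add: eval_nat_numeral)
  qed
  have chord: "\<bar>p0 \<bullet> u\<bar> = (norm u)\<^sup>2 / 2" "\<bar>p0 \<bullet> v\<bar> = (norm v)\<^sup>2 / 2" "\<bar>p0 \<bullet> w\<bar> = (norm w)\<^sup>2 / 2"
    using inner_chord_eq[OF assms(1)] inner_chord_eq[OF assms(2)] inner_chord_eq[OF assms(3)]
    by (simp_all add: u_v_w_def)
  have "\<bar>u \<bullet> (v \<times> w)\<bar> * norm p0 = norm ((u \<bullet> (v \<times> w)) *\<^sub>R p0)"
    by simp
  also have "\<dots> = norm ((p0 \<bullet> u) *\<^sub>R (v \<times> w) + (p0 \<bullet> v) *\<^sub>R (w \<times> u) + (p0 \<bullet> w) *\<^sub>R (u \<times> v))"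
    by (simp only: triple_product_smult_expansion)
  also have "\<dots> \<le> \<bar>p0 \<bullet> u\<bar> * norm (v \<times> w) + \<bar>p0 \<bullet> v\<bar> * norm (w \<times> u) + \<bar>p0 \<bullet> w\<bar> * norm (u \<times> v)"
    by (smt (verit) norm_scaleR norm_triangle_ineq)
  also have "\<dots> \<le> 3 / 2 * r ^ 4"
    using term_le[OF r(1,2,3) chord(1)] term_le[OF r(2,3,1) chord(2)] term_le[OF r(3,1,2) chord(3)]
    by linarith
  finally show ?thesis
    by (simp add: u_v_w_def)
qed

lemma sphere_lattice_coplanar:
  fixes p0 p1 p2 p3 :: "real^3"
  assumes "p0 \<in> sphere_lattice R" "p1 \<in> sphere_lattice R" "p2 \<in> sphere_lattice R" "p3 \<in> sphere_lattice R"
    and "norm (p1 - p0) \<le> r" "norm (p2 - p0) \<le> r" "norm (p3 - p0) \<le> r"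
    and "3 * r ^ 4 < 2 * R"
  shows "(p1 - p0) \<bullet> ((p2 - p0) \<times> (p3 - p0)) = 0"
proof -
  define T where "T = (p1 - p0) \<bullet> ((p2 - p0) \<times> (p3 - p0))"
  have norms: "norm p0 = R" "norm p1 = R" "norm p2 = R" "norm p3 = R"
    using assms(1-4) by (simp_all add: sphere_lattice_def)
  have "T \<in> \<int>"
    using assms(1-4) unfolding T_def sphere_lattice_def
    by (intro triple_product_Ints) (auto intro: Ints_diff)
  have "\<bar>T\<bar> * R \<le> 3 / 2 * r ^ 4"
    using abs_triple_product_mult_norm_le[of p1 p0 p2 p3 r] norms assms(5-7) by (simp add: T_def)
  also have "\<dots> < R"
    using assms(8) by simp
  finally have "\<bar>T\<bar> * R < 1 * R"
    by simp
  then have "\<bar>T\<bar> < 1"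
    using norm_ge_zero[of p0] norms(1) mult_right_less_imp_less by blast
  with \<open>T \<in> \<int>\<close> show ?thesis
    by (simp add: T_def Ints_nonzero_abs_less1)
qed

lemma sphere_chords_cross3_neq_0:
  fixes n n' x :: "real^3"
  assumes "norm n' = norm n" "norm x = norm n" "n \<noteq> n'" "n \<noteq> x" "n' \<noteq> x"
  shows "(n' - n) \<times> (x - n) \<noteq> 0"
proof
  assume "(n' - n) \<times> (x - n) = 0"
  moreover have "n' - n \<noteq> 0" "x - n \<noteq> 0"
    using assms by auto
  ultimately obtain t where t: "x - n = t *\<^sub>R (n' - n)"
    by (auto simp: cross_eq_0 collinear_lemma)
  define u where "u = n' - n"
  have "n \<bullet> u = - (norm u)\<^sup>2 / 2"
    using inner_chord_eq[OF assms(1)] by (simp add: u_def)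
  moreover have "n \<bullet> (t *\<^sub>R u) = - (norm (t *\<^sub>R u))\<^sup>2 / 2"
    using inner_chord_eq[OF assms(2)] t by (simp add: u_def)
  ultimately have "t * (norm u)\<^sup>2 = t\<^sup>2 * (norm u)\<^sup>2"
    by (simp add: power_mult_distrib algebra_simps)
  moreover have "u \<noteq> 0"
    using assms(3) by (simp add: u_def)
  ultimately have "t = 0 \<or> t = 1"
    by (simp add: power2_eq_square)
  then show False
    using t assms(4,5) by auto
qed

lemma inner_eq_0_if_coplanar:
  fixes u v w N :: "real^3"
  assumes "u \<times> v \<noteq> 0" "N \<bullet> u = 0" "N \<bullet> v = 0" "w \<bullet> (u \<times> v) = 0"
  shows "N \<bullet> w = 0"
proof -
  have "N \<bullet> (((u \<times> v) \<bullet> (u \<times> v)) *\<^sub>R w) = 0"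
    unfolding cross3_gram_expansion using assms(2-4) by (simp add: inner_add_right)
  then show ?thesis
    using assms(1) by simp
qed

lemma sphere_subset_hyperplane_if_coplanar:
  fixes S :: "(real^3) set"
  assumes on_sphere: "\<And>x. x \<in> S \<Longrightarrow> norm x = R"
    and coplanar: "\<And>a b c x. a \<in> S \<Longrightarrow> b \<in> S \<Longrightarrow> c \<in> S \<Longrightarrow> x \<in> S \<Longrightarrow>
      (b - a) \<bullet> ((c - a) \<times> (x - a)) = 0"
  obtains N \<beta> where "N \<noteq> 0" "S \<subseteq> {x. N \<bullet> x = \<beta>}"
proof (cases "\<exists>a\<in>S. \<exists>b\<in>S. \<exists>c\<in>S. a \<noteq> b \<and> a \<noteq> c \<and> b \<noteq> c")
  case True
  then obtain a b c where abc: "a \<in> S" "b \<in> S" "c \<in> S" "a \<noteq> b" "a \<noteq> c" "b \<noteq> c"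
    by blast
  define N where "N = (b - a) \<times> (c - a)"
  have "N \<noteq> 0"
    unfolding N_def using abc on_sphere by (intro sphere_chords_cross3_neq_0) auto
  moreover have "N \<bullet> x = N \<bullet> a" if "x \<in> S" for x
  proof -
    have "(x - a) \<bullet> N = 0"
      using coplanar[OF abc(1-3) that] triple_product_cyclic[of "b - a" "c - a" "x - a"]
      by (simp add: N_def)
    then show ?thesis
      by (simp add: inner_diff inner_commute)
  qed
  ultimately show ?thesis
    using that by blast
next
  case False
  then obtain a b where "S \<subseteq> {a, b}"
    by blast
  then have "aff_dim S \<le> aff_dim {a, b}"
    by (rule aff_dim_subset)
  then have "aff_dim S < DIM(real^3)"
    by (simp split: if_splits)
  then show ?thesis
    using aff_lowdim_subset_hyperplane that by blast
qed

lemma sphere_lattice_ball_subset_hyperplane: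
  assumes "3 * (2 * r) ^ 4 < 2 * R"
  obtains N \<beta> where "N \<noteq> 0" "{x \<in> sphere_lattice R. norm (x - m) < r} \<subseteq> {x. N \<bullet> x = \<beta>}"
proof (rule sphere_subset_hyperplane_if_coplanar)
  let ?S = "{x \<in> sphere_lattice R. norm (x - m) < r}"
  have close: "norm (b - a) \<le> 2 * r" if "a \<in> ?S" "b \<in> ?S" for a b
    using that norm_triangle_ineq4[of "b - m" "a - m"] by simp
  show "(b - a) \<bullet> ((c - a) \<times> (x - a)) = 0" if "a \<in> ?S" "b \<in> ?S" "c \<in> ?S" "x \<in> ?S" for a b c x
    using that close[OF that(1)] assms by (intro sphere_lattice_coplanar[where r = "2 * r"]) simp_all
qed (use that in \<open>auto simp: sphere_lattice_def\<close>)

lemma close_graph_path_stays_in_hyperplane: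
  assumes big: "3 * (4 * R powr (1/5)) ^ 4 < 2 * R"
    and edges: "close_graph R n n'" "close_graph R n' x" "close_graph R x z"
    and "x \<noteq> n"
    and in_plane: "N \<bullet> n = \<beta>" "N \<bullet> n' = \<beta>" "N \<bullet> x = \<beta>"
  shows "N \<bullet> z = \<beta>"
proof -
  define D where "D = R powr (1/5)"
  have vertices: "n \<in> sphere_lattice R" "n' \<in> sphere_lattice R" "x \<in> sphere_lattice R" "z \<in> sphere_lattice R"
    and "n \<noteq> n'" "n' \<noteq> x"
    and steps: "norm (n' - n) < D" "norm (x - n') < D" "norm (z - x) < D"
    using edges by (auto simp: close_graph_def D_def norm_minus_commute)
  have "norm (x - n) < 2 * D"
    using norm_triangle_ineq[of "x - n'" "n' - n"] steps by simp
  moreover have "norm (z - n) < 3 * D"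
    using norm_triangle_ineq[of "z - x" "x - n"] steps calculation by simp
  moreover have "D > 0"
    using steps(1) norm_ge_zero[of "n' - n"] by linarith
  ultimately have "(n' - n) \<bullet> ((x - n) \<times> (z - n)) = 0"
    using vertices steps big
    by (intro sphere_lattice_coplanar[where r = "4 * D"]) (simp_all add: D_def[symmetric])
  then have "(z - n) \<bullet> ((n' - n) \<times> (x - n)) = 0"
    by (simp only: triple_product_cyclic[of "n' - n" "x - n" "z - n"])
  moreover have "(n' - n) \<times> (x - n) \<noteq> 0"
    using vertices \<open>n \<noteq> n'\<close> \<open>n' \<noteq> x\<close> \<open>x \<noteq> n\<close>
    by (intro sphere_chords_cross3_neq_0) (auto simp: sphere_lattice_def)
  ultimately have "N \<bullet> (z - n) = 0"
    using inner_eq_0_if_coplanar[of "n' - n" "x - n" N "z - n"] in_plane by (simp add: inner_diff_right)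
  then show ?thesis
    using in_plane by (simp add: inner_diff_right)
qed

lemma rtranclp_mem_if_two_step_closed:
  assumes "E\<^sup>*\<^sup>* m n"
    and base: "m \<in> P" "\<And>x. E m x \<Longrightarrow> x \<in> P" "\<And>x z. E m x \<Longrightarrow> E x z \<Longrightarrow> z \<in> P"
    and step: "\<And>n n' x z. E n n' \<Longrightarrow> E n' x \<Longrightarrow> E x z \<Longrightarrow> x \<noteq> n \<Longrightarrow>
      n \<in> P \<Longrightarrow> n' \<in> P \<Longrightarrow> x \<in> P \<Longrightarrow> z \<in> P"
  shows "n \<in> P"
proof -
  have "n \<in> P \<and> (\<forall>x. E n x \<longrightarrow> x \<in> P) \<and> (\<forall>x z. E n x \<longrightarrow> E x z \<longrightarrow> z \<in> P)"
    using assms(1)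
  proof (induction rule: rtranclp_induct)
    case base
    then show ?case
      using assms(2-4) by blast
  next
    case (step n n')
    have "z \<in> P" if "E n' x" "E x z" for x z
      using step.IH step.hyps(2) that assms(5)[OF step.hyps(2) that] by (cases "x = n") blast+
    then show ?case
      using step.IH step.hyps(2) by blast
  qed
  then show ?thesis
    by blast
qed

lemma fifth_root_growth:
  fixes R :: real
  assumes "400 ^ 5 \<le> R"
  shows "3 * (4 * R powr (1/5)) ^ 4 < 2 * R"
proof -
  define D where "D = R powr (1/5)"
  have "R > 0"
    using assms by (rule less_le_trans[rotated]) (rule zero_less_power, simp)
  then have "D > 0"
    by (simp add: D_def)
  have "D ^ 5 = D powr (real 5)"
    using \<open>D > 0\<close> by (simp add: powr_realpow)
  also have "\<dots> = R"
    using \<open>R > 0\<close> by (simp add: D_def powr_powr)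
  finally have "D ^ 5 = R" .
  then have "400 \<le> D"
    using assms \<open>D > 0\<close> power_mono_iff[of 400 D 5] by simp
  then have "768 * D ^ 4 < 2 * D * D ^ 4"
    using \<open>D > 0\<close> by (intro mult_strict_right_mono) simp_all
  moreover have "3 * (4 * D) ^ 4 = 768 * D ^ 4"
    by (simp add: power_mult_distrib)
  moreover have "2 * D * D ^ 4 = 2 * D ^ 5"
    by (simp add: power_Suc[symmetric] del: power_Suc)
  ultimately show ?thesis
    using \<open>D ^ 5 = R\<close> by (simp add: D_def)
qed

lemma component_subset_hyperplane:
  assumes big: "3 * (4 * R powr (1/5)) ^ 4 < 2 * R"
    and m: "m \<in> sphere_lattice R"
    and ball: "{x \<in> sphere_lattice R. norm (x - m) < 2 * R powr (1/5)} \<subseteq> {x. N \<bullet> x = \<beta>}"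
  shows "component R m \<subseteq> {x. N \<bullet> x = \<beta>}"
proof
  define D where "D = R powr (1/5)"
  have "0 \<le> 3 * (4 * D) ^ 4"
    by simp
  then have "R > 0"
    using big unfolding D_def by linarith
  then have "D > 0"
    by (simp add: D_def)
  have edge: "x \<in> sphere_lattice R \<and> norm (x - y) < D" if "close_graph R y x" for x y
    using that by (simp add: close_graph_def D_def norm_minus_commute)
  note ball = ball[folded D_def]
  fix n assume "n \<in> component R m"
  then have "(close_graph R)\<^sup>*\<^sup>* m n"
    by (simp add: component_def)
  then show "n \<in> {x. N \<bullet> x = \<beta>}"
  proof (rule rtranclp_mem_if_two_step_closed)
    show "m \<in> {x. N \<bullet> x = \<beta>}"
      using m ball \<open>D > 0\<close> by auto
    show "x \<in> {x. N \<bullet> x = \<beta>}" if "close_graph R m x" for x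
      using edge[OF that] ball \<open>D > 0\<close> by auto
    show "z \<in> {x. N \<bullet> x = \<beta>}" if "close_graph R m x" "close_graph R x z" for x z
      using edge[OF that(1)] edge[OF that(2)] norm_triangle_ineq[of "z - x" "x - m"] ball by auto
  next
    show "z \<in> {x. N \<bullet> x = \<beta>}"
      if "close_graph R n n'" "close_graph R n' x" "close_graph R x z" "x \<noteq> n"
        "n \<in> {x. N \<bullet> x = \<beta>}" "n' \<in> {x. N \<bullet> x = \<beta>}" "x \<in> {x. N \<bullet> x = \<beta>}" for n n' x z
      using close_graph_path_stays_in_hyperplane[OF big that(1-4), of N \<beta>] that(5-7) by simp
  qed
qed

theorem lemma9p2:
  shows "\<exists>R0::real. \<forall>R::real. R \<ge> R0 \<longrightarrow> R\<^sup>2 \<in> \<int> \<longrightarrow>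
           (\<forall>m \<in> sphere_lattice R. \<exists>P :: (real^3) set.
               affine P \<and> aff_dim P = 2 \<and> component R m \<subseteq> P)"
proof (intro exI[of _ "400 ^ 5"] allI impI ballI)
  fix R :: real and m :: "real^3"
  assume "R \<ge> 400 ^ 5" and m: "m \<in> sphere_lattice R"
  then have big: "3 * (4 * R powr (1/5)) ^ 4 < 2 * R"
    by (intro fifth_root_growth)
  then have "3 * (2 * (2 * R powr (1/5))) ^ 4 < 2 * R"
    by simp
  then obtain N \<beta> where "N \<noteq> 0"
    and "{x \<in> sphere_lattice R. norm (x - m) < 2 * R powr (1/5)} \<subseteq> {x. N \<bullet> x = \<beta>}"
    by (rule sphere_lattice_ball_subset_hyperplane)
  then have "component R m \<subseteq> {x. N \<bullet> x = \<beta>}"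
    using big m by (intro component_subset_hyperplane)
  with \<open>N \<noteq> 0\<close> show "\<exists>P. affine P \<and> aff_dim P = 2 \<and> component R m \<subseteq> P"
    by (intro exI[of _ "{x. N \<bullet> x = \<beta>}"]) (simp add: affine_hyperplane)
qed

end
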